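(* Let $A\subset\Pi$ be a finite set with $2\in A\neq\{2\}$, and let $\alpha:A\to\mathbb{N}_0$ be a function with $\alpha(2)=1$ and $\alpha(p)\in\{0,\dots,p-1\}$ for all $p\in A\setminus\{2\}$. Let $x$ be the product of the odd primes in $A$ and let $y$ be any element of $\mathbb{N}\cap\bigcap_{p\in A}(\alpha(p)+p\mathbb{Z})$. Then the set $E=\{y,x,2x\}$ satisfies $A_E=A$ and $\alpha_E=\alpha$.
   Context: $\mathbb{N}=\{1,2,\dots\}$, $\mathbb{N}_0=\{0\}\cup\mathbb{N}$, $\Pi$ the set of primes, $\Pi_z$ the set of prime divisors of $z$. For a nonempty finite $E\subseteq\mathbb{N}$: $\Pi_E=\bigcap_{z\in E}\Pi_z$; $A_E=\{p\in\Pi:\exists k\in\mathbb{N}\ (E\subseteq\{0,k\}+p\mathbb{Z})\}$ where $\{0,k\}+p\mathbb{Z}=p\mathbb{Z}\cup(k+p\mathbb{Z})$; and $\alpha_E:A_E\to\mathbb{N}_0$ is the unique function such that (i) $0\le\alpha_E(p)<p$ for all $p\in A_E$, (ii) $E\subseteq\{0,\alpha_E(p)\}+p\mathbb{Z}$ for all $p\in A_E$, (iii) $\alpha_E(2)=1$ and $\alpha_E(p)=0$ for all $p\in\Pi_E\setminus\{2\}$. *)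

theory Defs
  imports "HOL-Computational_Algebra.Primes"
begin

definition PiE :: "nat set \<Rightarrow> nat set" where
  "PiE E = {p. prime p \<and> (\<forall>z\<in>E. p dvd z)}"

definition in_two_classes :: "nat set \<Rightarrow> nat \<Rightarrow> int \<Rightarrow> bool" where
  "in_two_classes E p k \<longleftrightarrow> (\<forall>z\<in>E. int z mod int p = 0 \<or> int z mod int p = k mod int p)"

definition AE :: "nat set \<Rightarrow> nat set" where
  "AE E = {p. prime p \<and> (\<exists>k::nat. k \<ge> 1 \<and> in_two_classes E p (int k))}"

text \<open>alpha_E (only meaningful on AE E); defined pointwise as the unique value
  satisfying (i)-(iii), which is equivalent to the unique function.\<close>
definition alphaE :: "nat set \<Rightarrow> nat \<Rightarrow> nat" where
  "alphaE E p = (THE a. a < p \<and> in_two_classes E p (int a) \<and>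
      (p = 2 \<longrightarrow> a = 1) \<and> (p \<in> PiE E - {2} \<longrightarrow> a = 0))"

end

(* Every odd prime p of A divides x and 2x, so the only admissible pair of classes is
   {0, y mod p}, which pins alpha_E(p) down to y mod p = alpha(p).  A prime outside A divides
   neither x nor 2x, and x, 2x are incongruent modulo it, so x and 2x occupy two distinct
   nonzero classes and E fits into no {0,k} + pZ.  Modulo 2 every set fits into {0,1} + 2Z. *)
theory Submission
  imports Defs
begin

lemma in_two_classes_nat_iff:
  "in_two_classes E p (int k) \<longleftrightarrow> (\<forall>z\<in>E. z mod p = 0 \<or> z mod p = k mod p)"
  unfolding in_two_classes_def by (simp flip: of_nat_mod)

lemma in_two_classes_two: "in_two_classes E 2 1"
  using in_two_classes_nat_iff[of E 2 1] by (simp add: mod2_eq_if)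

lemma in_two_classes_if_dvd_others:
  assumes "\<forall>z\<in>E - {y}. p dvd z"
  shows "in_two_classes E p (int y)"
  using assms unfolding in_two_classes_nat_iff by (metis Diff_iff dvd_eq_mod_eq_0 singletonD)

lemma not_in_two_classes_if_not_dvd_double:
  assumes "x \<in> E" and "2 * x \<in> E" and "\<not> p dvd 2 * x"
  shows "\<not> in_two_classes E p k"
proof
  assume classes: "in_two_classes E p k"
  have "\<not> p dvd x" using assms(3) by auto
  moreover have "x mod p \<noteq> 0" "2 * x mod p \<noteq> 0"
    using \<open>\<not> p dvd x\<close> assms(3) by (simp_all add: dvd_eq_mod_eq_0)
  ultimately have "int (x mod p) = k mod int p" "int (2 * x mod p) = k mod int p"
    using classes assms(1,2) unfolding in_two_classes_def by (auto simp flip: of_nat_mod)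
  then have "p dvd 2 * x - x"
    using mod_eq_dvd_iff_nat[of x "2 * x" p] by simp
  with \<open>\<not> p dvd x\<close> show False by simp
qed

lemma in_AE_if_in_two_classes:
  assumes "prime p" and "in_two_classes E p k"
  shows "p \<in> AE E"
proof -
  \<comment> \<open>AE asks for a positive representative, so shift the residue by p\<close>
  define k' where "k' = nat (k mod int p) + p"
  have "p > 0" using assms(1) prime_gt_0_nat by blast
  then have "int k' mod int p = k mod int p"
    by (simp add: k'_def)
  then have "in_two_classes E p (int k')"
    using assms(2) unfolding in_two_classes_def by simp
  moreover have "k' \<ge> 1" using \<open>p > 0\<close> by (simp add: k'_def)
  ultimately show ?thesis using assms(1) unfolding AE_def by blast
qed

lemma two_in_AE: "2 \<in> AE E"
  using in_AE_if_in_two_classes[OF two_is_prime_nat in_two_classes_two] .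

lemma alphaE_two: "alphaE E 2 = 1"
  unfolding alphaE_def by (rule the_equality) (auto simp: in_two_classes_two)

text \<open>For an odd prime p dividing every element of E except y, the two classes must be
  those of 0 and y; if p also divides y, condition (iii) picks the representative 0.\<close>
lemma alphaE_eq_mod:
  assumes "prime p" and "p \<noteq> 2" and "y \<in> E" and dvd_others: "\<forall>z\<in>E - {y}. p dvd z"
  shows "alphaE E p = y mod p"
  unfolding alphaE_def
proof (rule the_equality)
  have "p > 0" using assms(1) prime_gt_0_nat by blast
  show "y mod p < p \<and> in_two_classes E p (int (y mod p)) \<and> (p = 2 \<longrightarrow> y mod p = 1) \<and>
      (p \<in> PiE E - {2} \<longrightarrow> y mod p = 0)"
    using \<open>p > 0\<close> assms in_two_classes_if_dvd_others[OF dvd_others]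
    by (auto simp: in_two_classes_def PiE_def simp flip: of_nat_mod)
next
  fix a
  assume a: "a < p \<and> in_two_classes E p (int a) \<and> (p = 2 \<longrightarrow> a = 1) \<and>
      (p \<in> PiE E - {2} \<longrightarrow> a = 0)"
  show "a = y mod p"
  proof (cases "p dvd y")
    case True
    then have "p \<in> PiE E - {2}"
      using assms unfolding PiE_def by auto
    with a True show ?thesis by simp
  next
    case False
    with a assms(3) show ?thesis
      by (auto simp: in_two_classes_nat_iff dvd_eq_mod_eq_0)
  qed
qed

lemma prime_dvd_prod_primes_iff:
  fixes P :: "nat set"
  assumes "finite P" and "\<forall>q\<in>P. prime q" and "prime p"
  shows "p dvd \<Prod>P \<longleftrightarrow> p \<in> P"
proof -
  have "p dvd \<Prod>P \<longleftrightarrow> (\<exists>q\<in>P. p dvd q)"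
    using prime_dvd_prod_iff[OF assms(1,3), of id] by simp
  also have "\<dots> \<longleftrightarrow> p \<in> P"
    using assms(2,3) primes_dvd_imp_eq by (metis dvd_refl)
  finally show ?thesis .
qed

theorem lemma3p3:
  fixes A :: "nat set" and \<alpha> :: "nat \<Rightarrow> nat" and y :: nat
  assumes "finite A" and "\<forall>p\<in>A. prime p" and "2 \<in> A" and "A \<noteq> {2}"
    and "\<alpha> 2 = 1" and "\<forall>p\<in>A - {2}. \<alpha> p < p"
    and "y \<ge> 1" and "\<forall>p\<in>A. int y mod int p = int (\<alpha> p) mod int p"
  defines "x \<equiv> (\<Prod>p\<in>A - {2}. p)"
  shows "AE {y, x, 2 * x} = A \<and> (\<forall>p\<in>A. alphaE {y, x, 2 * x} p = \<alpha> p)"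
proof -
  let ?E = "{y, x, 2 * x}"
  have dvd_x: "p dvd x \<longleftrightarrow> p \<in> A - {2}" if "prime p" for p
    unfolding x_def using prime_dvd_prod_primes_iff[of "A - {2}" p] assms(1,2) that by auto
  have dvd_others: "\<forall>z\<in>?E - {y}. p dvd z" if "p \<in> A - {2}" for p
    using that dvd_x assms(2) by auto
  have "AE ?E \<subseteq> A"
  proof
    fix p assume "p \<in> AE ?E"
    then have "prime p" and "\<exists>k. in_two_classes ?E p k" unfolding AE_def by auto
    then have "p dvd 2 * x"
      using not_in_two_classes_if_not_dvd_double[of x ?E p] by auto
    then have "p dvd 2 \<or> p dvd x"
      using \<open>prime p\<close> prime_dvd_mult_iff by blast
    then show "p \<in> A"
      using dvd_x[OF \<open>prime p\<close>] assms(3) primes_dvd_imp_eq[OF \<open>prime p\<close> two_is_prime_nat]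
      by blast
  qed
  moreover have "p \<in> AE ?E" if "p \<in> A" for p
  proof (cases "p = 2")
    case False
    with that have "in_two_classes ?E p (int y)"
      using in_two_classes_if_dvd_others dvd_others by blast
    with that show ?thesis
      using in_AE_if_in_two_classes assms(2) by blast
  qed (simp add: two_in_AE)
  moreover have "alphaE ?E p = \<alpha> p" if "p \<in> A" for p
  proof (cases "p = 2")
    case False
    then have "alphaE ?E p = y mod p"
      using alphaE_eq_mod[of p y ?E] dvd_others[of p] assms(2) that by simp
    also have "\<dots> = \<alpha> p"
      using assms(6,8) that False by (simp flip: of_nat_mod)
    finally show ?thesis .
  qed (simp add: alphaE_two assms(5))
  ultimately show ?thesis by blast
qed

end
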